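(* Let $P$ be a Poisson bracket on $\mathbb{R}^n$, let $\ast_\nu$ be a star-product on $(\mathbb{R}^n,P)$, and let $\odot_\nu$ be the sun-product associated to $\ast_\nu$, defined on $\mathsf{N}^0_\nu$. Then $\odot_\nu$ is an Abelian, associative product on $\mathsf{N}^0_\nu$; it is $\mathbb{R}$-bilinear but fails to be $\mathbb{R}[[\nu]]$-bilinear. Consequently $\mathsf{N}^0_\nu$ endowed with $\odot_\nu$ is an Abelian $\mathbb{R}$-algebra.
   Context: Let $\mathsf{N}=C^\infty(\mathbb{R}^n)$ (real-valued), with coordinates $x_1,\dots,x_n$, and $\mathsf{Pol}=\mathbb{R}[x_1,\dots,x_n]\subset\mathsf{N}$. For a formal parameter $\nu$, $\mathsf{N}_\nu=\mathsf{N}[[\nu]]$, and $\mathsf{N}^0_\nu\subset\mathsf{N}_\nu$ is the subalgebra of formal series whose $\nu^0$-coefficient lies in $\mathsf{Pol}$; $\pi:\mathsf{N}_\nu\to\mathsf{N}$ is the projection onto the $\nu^0$-coefficient. A (differential) star-product on $(\mathbb{R}^n,P)$ is a bilinear map $f\ast_\nu g=\sum_{r\ge0}\nu^rC_r(f,g)$ from $\mathsf{N}\times\mathsf{N}$ to $\mathsf{N}[[\nu]]$, extended $\mathbb{R}[[\nu]]$-bilinearly to $\mathsf{N}_\nu$, where the $C_r$ are bidifferential operators with: $C_0(f,g)=fg$; $C_r(c,f)=C_r(f,c)=0$ for $r\ge1$ and constants $c$; associativity $\sum_{s+t=r}C_s(C_t(f,g),h)=\sum_{s+t=r}C_s(f,C_t(g,h))$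 for all $r\ge0$; and $C_1(f,g)-C_1(g,f)=2P(f,g)$. Let $\mathcal{S}(\mathsf{Pol})$ be the symmetric tensor algebra over $\mathsf{Pol}$ with product $\otimes$, let $\lambda:\mathsf{Pol}\to\mathcal{S}(\mathsf{Pol})$ be the $\mathbb{R}$-algebra homomorphism with $\lambda(x_1^{k_1}\cdots x_n^{k_n})=x_1^{\otimes k_1}\otimes\cdots\otimes x_n^{\otimes k_n}$, and let $T_{\ast_\nu}:\mathcal{S}(\mathsf{Pol})\to\mathsf{N}^0_\nu$ be the $\mathbb{R}$-linear map with $T_{\ast_\nu}(I)=1$ ($I$ the unit of $\mathcal{S}(\mathsf{Pol})$) and $T_{\ast_\nu}(f_1\otimes\cdots\otimes f_k)=\frac1{k!}\sum_{\sigma\in S_k}f_{\sigma(1)}\ast_\nu\cdots\ast_\nu f_{\sigma(k)}$ for $f_i\in\mathsf{Pol}$. The sun-product associated to $\ast_\nu$ is $f\odot_\nu g=T_{\ast_\nu}(\lambda(\pi(f))\otimes\lambda(\pi(g)))$ for $f,g\in\mathsf{N}^0_\nu$. *)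

theory Defs
  imports "HOL-Analysis.Analysis" "HOL-Library.Multiset" "HOL-Combinatorics.Permutations"
begin

type_synonym 'n fn = "real^'n \<Rightarrow> real"
type_synonym 'n fser = "nat \<Rightarrow> 'n fn"   (* element of N[[nu]]: sequence of coefficients *)

definition pd :: "'n::finite \<Rightarrow> 'n fn \<Rightarrow> 'n fn" where
  "pd i f = (\<lambda>x. deriv (\<lambda>t. f (x + t *\<^sub>R axis i 1)) 0)"

fun pds :: "'n::finite list \<Rightarrow> 'n fn \<Rightarrow> 'n fn" where
  "pds [] f = f"
| "pds (i # is) f = pd i (pds is f)"

definition smooth :: "('n::finite) fn \<Rightarrow> bool" where
  "smooth f \<longleftrightarrow> (\<forall>is. continuous_on UNIV (pds is f) \<and>
      (\<forall>i x. (\<lambda>t. pds is f (x + t *\<^sub>R axis i 1)) field_differentiable (at 0)))"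

definition coord :: "'n::finite \<Rightarrow> 'n fn" where
  "coord i = (\<lambda>x. x $ i)"

definition monom :: "('n::finite \<Rightarrow> nat) \<Rightarrow> 'n fn" where
  "monom m = (\<lambda>x. \<Prod>i\<in>UNIV. (x $ i) ^ (m i))"

definition is_pol :: "('n::finite) fn \<Rightarrow> bool" where
  "is_pol p \<longleftrightarrow> (\<exists>c. finite {m. c m \<noteq> 0} \<and>
      p = (\<lambda>x. \<Sum>m\<in>{m. c m \<noteq> 0}. c m * monom m x))"

definition pol_coeffs :: "('n::finite) fn \<Rightarrow> ('n \<Rightarrow> nat) \<Rightarrow> real" where
  "pol_coeffs p = (THE c. finite {m. c m \<noteq> 0} \<and>
      p = (\<lambda>x. \<Sum>m\<in>{m. c m \<noteq> 0}. c m * monom m x))"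

definition bidiff :: "('n::finite fn \<Rightarrow> 'n fn \<Rightarrow> 'n fn) \<Rightarrow> bool" where
  "bidiff B \<longleftrightarrow> (\<exists>S c. finite (S :: ('n list \<times> 'n list) set) \<and> (\<forall>ab\<in>S. smooth (c ab)) \<and>
      (\<forall>f g. smooth f \<longrightarrow> smooth g \<longrightarrow>
         B f g = (\<lambda>x. \<Sum>(a,b)\<in>S. c (a,b) x * pds a f x * pds b g x)))"

definition poisson_bracket :: "('n::finite fn \<Rightarrow> 'n fn \<Rightarrow> 'n fn) \<Rightarrow> bool" where
  "poisson_bracket P \<longleftrightarrow>
     (\<forall>f g. smooth f \<longrightarrow> smooth g \<longrightarrow> smooth (P f g)) \<and>
     (\<forall>a b f g h. smooth f \<longrightarrow> smooth g \<longrightarrow> smooth h \<longrightarrow>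
         P (\<lambda>x. a * f x + b * g x) h = (\<lambda>x. a * P f h x + b * P g h x)) \<and>
     (\<forall>f g. smooth f \<longrightarrow> smooth g \<longrightarrow> P f g = (\<lambda>x. - P g f x)) \<and>
     (\<forall>f g h. smooth f \<longrightarrow> smooth g \<longrightarrow> smooth h \<longrightarrow>
         P f (\<lambda>x. g x * h x) = (\<lambda>x. P f g x * h x + g x * P f h x)) \<and>
     (\<forall>f g h. smooth f \<longrightarrow> smooth g \<longrightarrow> smooth h \<longrightarrow>
         (\<lambda>x. P f (P g h) x + P g (P h f) x + P h (P f g) x) = (\<lambda>x. 0))"

text \<open>A star-product sum_r nu^r C_r on (R^n, P), given by its family of cochains C.\<close>

definition star_product :: "('n::finite fn \<Rightarrow> 'n fn \<Rightarrow> 'n fn) \<Rightarrow> (nat \<Rightarrow> 'n fn \<Rightarrow> 'n fn \<Rightarrow> 'n fn) \<Rightarrow> bool" where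
  "star_product P C \<longleftrightarrow>
     (\<forall>r. bidiff (C r)) \<and>
     (\<forall>f g. smooth f \<longrightarrow> smooth g \<longrightarrow> C 0 f g = (\<lambda>x. f x * g x)) \<and>
     (\<forall>r c f. r \<ge> 1 \<longrightarrow> smooth f \<longrightarrow>
         C r (\<lambda>x. c) f = (\<lambda>x. 0) \<and> C r f (\<lambda>x. c) = (\<lambda>x. 0)) \<and>
     (\<forall>r f g h. smooth f \<longrightarrow> smooth g \<longrightarrow> smooth h \<longrightarrow>
         (\<lambda>x. \<Sum>s\<le>r. C s (C (r - s) f g) h x) = (\<lambda>x. \<Sum>s\<le>r. C s f (C (r - s) g h) x)) \<and>
     (\<forall>f g. smooth f \<longrightarrow> smooth g \<longrightarrow> (\<lambda>x. C 1 f g x - C 1 g f x) = (\<lambda>x. 2 * P f g x))"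

definition const_ser :: "'n fn \<Rightarrow> 'n fser" where
  "const_ser f = (\<lambda>r. if r = 0 then f else (\<lambda>x. 0))"

definition one_ser :: "'n fser" where
  "one_ser = const_ser (\<lambda>x. 1)"

definition ser_add :: "'n fser \<Rightarrow> 'n fser \<Rightarrow> 'n fser" where
  "ser_add F G = (\<lambda>r x. F r x + G r x)"

definition ser_scale :: "real \<Rightarrow> 'n fser \<Rightarrow> 'n fser" where
  "ser_scale a F = (\<lambda>r x. a * F r x)"

text \<open>Multiplication by a scalar c in R[[nu]].\<close>
definition ser_smult :: "(nat \<Rightarrow> real) \<Rightarrow> 'n fser \<Rightarrow> 'n fser" where
  "ser_smult c F = (\<lambda>r x. \<Sum>s\<le>r. c s * F (r - s) x)"

definition N0 :: "('n::finite) fser set" where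
  "N0 = {F. (\<forall>r. smooth (F r)) \<and> is_pol (F 0)}"

definition proj0 :: "'n fser \<Rightarrow> 'n fn" where
  "proj0 F = F 0"

text \<open>R[[nu]]-bilinear extension of the star product to N[[nu]].\<close>
definition star :: "(nat \<Rightarrow> 'n fn \<Rightarrow> 'n fn \<Rightarrow> 'n fn) \<Rightarrow> 'n fser \<Rightarrow> 'n fser \<Rightarrow> 'n fser" where
  "star C F G = (\<lambda>r x. \<Sum>s\<le>r. \<Sum>t\<le>r - s. C s (F t) (G (r - s - t)) x)"

fun star_list :: "(nat \<Rightarrow> 'n fn \<Rightarrow> 'n fn \<Rightarrow> 'n fn) \<Rightarrow> 'n fn list \<Rightarrow> 'n fser" where
  "star_list C [] = one_ser"
| "star_list C (f # fs) = star C (const_ser f) (star_list C fs)"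

text \<open>An element of S(Pol) is represented as a finitely supported real combination of
  monomials f_1 (x) ... (x) f_k, a monomial being the multiset {#f_1,...,f_k#}
  (multilinearity relations are not quotiented out; T is well defined on this
  presentation since star is bilinear).\<close>

type_synonym 'n sym_tensor = "'n fn multiset \<Rightarrow> real"

definition tunit :: "'n sym_tensor" where
  "tunit = (\<lambda>M. if M = {#} then 1 else 0)"

definition tprod :: "'n sym_tensor \<Rightarrow> 'n sym_tensor \<Rightarrow> 'n sym_tensor" where
  "tprod A B = (\<lambda>M. \<Sum>N\<in>{N. N \<subseteq># M}. A N * B (M - N))"

definition monoset :: "('n::finite \<Rightarrow> nat) \<Rightarrow> 'n fn multiset" where
  "monoset m = (\<Sum>i\<in>UNIV. replicate_mset (m i) (coord i))"

text \<open>lambda: x_1^k_1 ... x_n^k_n  |->  x_1^(x)k_1 (x) ... (x) x_n^(x)k_n, extended linearly.\<close>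
definition lam :: "('n::finite) fn \<Rightarrow> 'n sym_tensor" where
  "lam p = (\<lambda>M. \<Sum>m\<in>{m. pol_coeffs p m \<noteq> 0 \<and> monoset m = M}. pol_coeffs p m)"

definition Tmon :: "(nat \<Rightarrow> 'n fn \<Rightarrow> 'n fn \<Rightarrow> 'n fn) \<Rightarrow> 'n fn multiset \<Rightarrow> 'n fser" where
  "Tmon C M = (let w = (SOME w. mset w = M); k = length w in
      (\<lambda>r x. (1 / fact k) *
         (\<Sum>\<sigma>\<in>{\<sigma>. \<sigma> permutes {..<k}}. star_list C (map (\<lambda>i. w ! \<sigma> i) [0..<k]) r x)))"

definition Tstar :: "(nat \<Rightarrow> 'n fn \<Rightarrow> 'n fn \<Rightarrow> 'n fn) \<Rightarrow> 'n sym_tensor \<Rightarrow> 'n fser" where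
  "Tstar C A = (\<lambda>r x. \<Sum>M\<in>{M. A M \<noteq> 0}. A M * Tmon C M r x)"

definition sun :: "(nat \<Rightarrow> ('n::finite) fn \<Rightarrow> 'n fn \<Rightarrow> 'n fn) \<Rightarrow> 'n fser \<Rightarrow> 'n fser \<Rightarrow> 'n fser" where
  "sun C F G = Tstar C (tprod (lam (proj0 F)) (lam (proj0 G)))"

end

theory Submission
  imports Defs
begin

(* The order-0 coefficient of T(lam p) is p itself, because C_0 is the pointwise product, and lam
   turns the pointwise product of polynomials into the product of S(Pol). Hence
   F sun G = T(lam(F_0 G_0)) depends only on the polynomial F_0 G_0, and commutativity,
   associativity and R-bilinearity are inherited from the pointwise product and the linearity of
   T o lam. Computing lam of a product needs the uniqueness of the coefficients of a polynomial
   function, proved by induction on the number of variables. Every coefficient of F sun G is smooth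
   since bidifferential operators preserve smoothness. Only order-0 coefficients enter, so
   (nu 1) sun 1 = 0 while nu (1 sun 1) = nu: the product is not R[[nu]]-bilinear. *)

section \<open>Smooth functions\<close>

lemma pds_append: "pds (is @ js) f = pds is (pds js f)"
  by (induction "is") auto

lemma smooth_pds: "smooth f \<Longrightarrow> smooth (pds is f)"
  unfolding smooth_def by (simp add: pds_append[symmetric])

lemma smooth_continuous_on: "smooth f \<Longrightarrow> continuous_on UNIV f"
  unfolding smooth_def by (metis pds.simps(1))

lemma smooth_has_partial_derivative:
  "smooth f \<Longrightarrow> ((\<lambda>t. f (x + t *\<^sub>R axis i 1)) has_field_derivative pd i f x) (at 0)"
  unfolding smooth_def pd_def by (metis DERIV_deriv_iff_field_differentiable pds.simps(1))

lemma smooth_if_derivative_closed: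
  assumes cont: "\<And>g. g \<in> A \<Longrightarrow> continuous_on UNIV g"
    and deriv: "\<And>g i. g \<in> A \<Longrightarrow>
      \<exists>D\<in>A. \<forall>x. ((\<lambda>t. g (x + t *\<^sub>R axis i 1)) has_field_derivative D x) (at 0)"
    and "f \<in> A"
  shows "smooth f"
proof -
  have pd_closed: "pd i g \<in> A" if "g \<in> A" for g i
  proof -
    obtain D where "D \<in> A"
      and D: "\<And>x. ((\<lambda>t. g (x + t *\<^sub>R axis i 1)) has_field_derivative D x) (at 0)"
      using deriv[OF \<open>g \<in> A\<close>] by blast
    have "pd i g = D"
      unfolding pd_def using D by (intro ext DERIV_imp_deriv)
    with \<open>D \<in> A\<close> show ?thesis by simp
  qed
  have pds_in: "pds is f \<in> A" for "is"
    by (induction "is") (use \<open>f \<in> A\<close> pd_closed in auto)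
  show ?thesis
    unfolding smooth_def field_differentiable_def
    using pds_in cont deriv by blast
qed

lemma smooth_const_coord:
  assumes "f \<in> range (\<lambda>c x. c) \<union> range coord"
  shows "smooth f"
proof (rule smooth_if_derivative_closed[OF _ _ assms])
  fix g i
  assume "g \<in> range (\<lambda>c x. c) \<union> range coord"
  then consider (const) c where "g = (\<lambda>x. c)" | (coord) j where "g = coord j"
    by blast
  note g_cases = this
  then show "continuous_on UNIV g"
    by cases (auto simp: coord_def intro!: continuous_intros)
  show "\<exists>D\<in>range (\<lambda>c x. c) \<union> range coord.
      \<forall>x. ((\<lambda>t. g (x + t *\<^sub>R axis i 1)) has_field_derivative D x) (at 0)"
    using g_cases
  proof cases
    case const
    then show ?thesis by (intro bexI[of _ "\<lambda>x. 0"]) auto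
  next
    case (coord j)
    have "((\<lambda>t. g (x + t *\<^sub>R axis i 1)) has_field_derivative axis i 1 $ j) (at 0)" for x
      unfolding coord coord_def by (auto intro!: derivative_eq_intros)
    then show ?thesis by (intro bexI[of _ "\<lambda>x. axis i 1 $ j"]) auto
  qed
qed

lemma smooth_const: "smooth (\<lambda>x. c)"
  by (rule smooth_const_coord) auto

lemma smooth_coord: "smooth (coord j)"
  by (rule smooth_const_coord) auto

lemma smooth_lincomb:
  fixes f g :: "'n::finite fn"
  assumes "smooth f" "smooth g"
  shows "smooth (\<lambda>x. a * f x + b * g x)"
proof -
  define A :: "'n fn set" where "A = {\<lambda>x. a * f x + b * g x | a b f g. smooth f \<and> smooth g}"
  have cont: "continuous_on UNIV h" if "h \<in> A" for h
    using that unfolding A_def by (auto intro!: continuous_intros simp: smooth_continuous_on)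
  have deriv: "\<exists>D\<in>A. \<forall>x. ((\<lambda>t. h (x + t *\<^sub>R axis i 1)) has_field_derivative D x) (at 0)"
    if "h \<in> A" for h i
  proof -
    obtain a b f g where h: "h = (\<lambda>x. a * f x + b * g x)" and "smooth f" "smooth g"
      using \<open>h \<in> A\<close> unfolding A_def by blast
    show ?thesis
    proof (rule bexI)
      show "\<forall>x. ((\<lambda>t. h (x + t *\<^sub>R axis i 1))
          has_field_derivative a * pd i f x + b * pd i g x) (at 0)"
        unfolding h using \<open>smooth f\<close> \<open>smooth g\<close>
        by (intro allI DERIV_add DERIV_cmult smooth_has_partial_derivative)
      show "(\<lambda>x. a * pd i f x + b * pd i g x) \<in> A"
        unfolding A_def using \<open>smooth f\<close> \<open>smooth g\<close> smooth_pds[of _ "[i]"] by fastforce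
    qed
  qed
  have "(\<lambda>x. a * f x + b * g x) \<in> A"
    unfolding A_def using assms by blast
  with cont deriv show ?thesis by (rule smooth_if_derivative_closed)
qed

lemma smooth_scale: "smooth f \<Longrightarrow> smooth (\<lambda>x. a * f x)"
  using smooth_lincomb[of f f a 0] by simp

lemma smooth_const_ser: "smooth f \<Longrightarrow> smooth (const_ser f r)"
  unfolding const_ser_def by (simp add: smooth_const)

lemma smooth_sum:
  "finite I \<Longrightarrow> (\<And>i. i \<in> I \<Longrightarrow> smooth (f i)) \<Longrightarrow> smooth (\<lambda>x. \<Sum>i\<in>I. f i x)"
proof (induction I rule: finite_induct)
  case empty
  show ?case using smooth_const[of 0] by simp
next
  case (insert i I)
  then show ?case using smooth_lincomb[of "f i" "\<lambda>x. \<Sum>i\<in>I. f i x" 1 1] by simp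
qed

lemma has_derivative_sum_list_products:
  assumes "\<forall>p\<in>set L. smooth (fst p) \<and> smooth (snd p)"
  shows "((\<lambda>t. \<Sum>p\<leftarrow>L. fst p (x + t *\<^sub>R axis i 1) * snd p (x + t *\<^sub>R axis i 1))
    has_field_derivative (\<Sum>p\<leftarrow>L. pd i (fst p) x * snd p x + fst p x * pd i (snd p) x)) (at 0)"
  using assms
  by (induction L) (auto intro!: derivative_eq_intros smooth_has_partial_derivative)

lemma smooth_mult:
  fixes f g :: "'n::finite fn"
  assumes "smooth f" "smooth g"
  shows "smooth (\<lambda>x. f x * g x)"
proof -
  \<comment> \<open>sums of products of smooth functions: by the Leibniz rule they are closed under pd\<close>
  define A :: "'n fn set" where
    "A = {\<lambda>x. \<Sum>p\<leftarrow>L. fst p x * snd p x | L. \<forall>p\<in>set L. smooth (fst p) \<and> smooth (snd p)}"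
  have cont: "continuous_on UNIV h" if "h \<in> A" for h
  proof -
    obtain L where h: "h = (\<lambda>x. \<Sum>p\<leftarrow>L. fst p x * snd p x)"
      and L: "\<forall>p\<in>set L. smooth (fst p) \<and> smooth (snd p)"
      using \<open>h \<in> A\<close> unfolding A_def by blast
    show ?thesis
      unfolding h using L
      by (induction L) (simp_all add: continuous_on_add continuous_on_mult smooth_continuous_on)
  qed
  have deriv: "\<exists>D\<in>A. \<forall>x. ((\<lambda>t. h (x + t *\<^sub>R axis i 1)) has_field_derivative D x) (at 0)"
    if "h \<in> A" for h i
  proof -
    obtain L where h: "h = (\<lambda>x. \<Sum>p\<leftarrow>L. fst p x * snd p x)"
      and L: "\<forall>p\<in>set L. smooth (fst p) \<and> smooth (snd p)"
      using \<open>h \<in> A\<close> unfolding A_def by blast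
    define L' where "L' = map (\<lambda>p. (pd i (fst p), snd p)) L @ map (\<lambda>p. (fst p, pd i (snd p))) L"
    have L'_sum: "(\<Sum>p\<leftarrow>L. pd i (fst p) x * snd p x + fst p x * pd i (snd p) x)
        = (\<Sum>p\<leftarrow>L'. fst p x * snd p x)" for x
      unfolding L'_def by (simp add: sum_list_addf comp_def)
    show ?thesis
    proof (rule bexI)
      show "\<forall>x. ((\<lambda>t. h (x + t *\<^sub>R axis i 1))
          has_field_derivative (\<Sum>p\<leftarrow>L'. fst p x * snd p x)) (at 0)"
        unfolding h L'_sum[symmetric] using has_derivative_sum_list_products[OF L] by blast
      have "\<forall>p\<in>set L'. smooth (fst p) \<and> smooth (snd p)"
        using L smooth_pds[of _ "[i]"] by (auto simp: L'_def)
      then show "(\<lambda>x. \<Sum>p\<leftarrow>L'. fst p x * snd p x) \<in> A"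
        unfolding A_def by blast
    qed
  qed
  have "(\<lambda>x. f x * g x) \<in> A"
    unfolding A_def using assms by (intro CollectI exI[of _ "[(f, g)]"]) auto
  with cont deriv show ?thesis by (rule smooth_if_derivative_closed)
qed

lemma smooth_bidiff:
  assumes "bidiff B" "smooth f" "smooth g"
  shows "smooth (B f g)"
proof -
  obtain S c where "finite S" and c: "\<And>ab. ab \<in> S \<Longrightarrow> smooth (c ab)"
    and B: "B f g = (\<lambda>x. \<Sum>(a, b)\<in>S. c (a, b) x * pds a f x * pds b g x)"
    using assms unfolding bidiff_def by blast
  show ?thesis
    unfolding B case_prod_beta using \<open>finite S\<close> c assms(2,3)
    by (intro smooth_sum smooth_mult smooth_pds) auto
qed

section \<open>Polynomial functions and their presentations\<close>

text \<open>A polynomial function and the element of S(Pol) that lam assigns to it, presented as finite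
  combinations of monomials indexed by an arbitrary set, repetitions allowed. By the uniqueness of
  coefficients, lam may be computed on any presentation (lam_pol_sum).\<close>

definition pol_sum :: "'i set \<Rightarrow> ('i \<Rightarrow> real) \<Rightarrow> ('i \<Rightarrow> 'n::finite \<Rightarrow> nat) \<Rightarrow> 'n fn" where
  "pol_sum I e k = (\<lambda>x. \<Sum>i\<in>I. e i * monom (k i) x)"

definition tensor_sum :: "'i set \<Rightarrow> ('i \<Rightarrow> real) \<Rightarrow> ('i \<Rightarrow> 'n::finite \<Rightarrow> nat) \<Rightarrow> 'n sym_tensor" where
  "tensor_sum I e k = (\<lambda>M. \<Sum>i\<in>I. e i * of_bool (monoset (k i) = M))"

lemma is_pol_iff_pol_sum: "is_pol p \<longleftrightarrow> (\<exists>c. finite {m. c m \<noteq> 0} \<and> p = pol_sum {m. c m \<noteq> 0} c id)"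
  unfolding is_pol_def pol_sum_def by simp

lemma is_polE:
  assumes "is_pol p"
  obtains S c where "finite S" "p = pol_sum S c id"
  using assms unfolding is_pol_iff_pol_sum by blast

lemma sum_regroup_by_image:
  fixes e :: "'i \<Rightarrow> 'a::semiring_0"
  assumes "finite I"
  shows "(\<Sum>i\<in>I. e i * \<phi> (k i)) = (\<Sum>m\<in>k ` I. (\<Sum>i | i \<in> I \<and> k i = m. e i) * \<phi> m)"
proof -
  have "(\<Sum>i | i \<in> I \<and> k i = m. e i) * \<phi> m = (\<Sum>i | i \<in> I \<and> k i = m. e i * \<phi> (k i))" for m
    by (subst sum_distrib_right) (rule sum.cong, auto)
  then have "(\<Sum>m\<in>k ` I. (\<Sum>i | i \<in> I \<and> k i = m. e i) * \<phi> m)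
      = (\<Sum>m\<in>k ` I. \<Sum>i | i \<in> I \<and> k i = m. e i * \<phi> (k i))"
    by simp
  also have "\<dots> = (\<Sum>i\<in>I. e i * \<phi> (k i))"
    using assms by (intro sum.group) auto
  finally show ?thesis ..
qed

lemma pol_sum_regroup:
  "finite I \<Longrightarrow> pol_sum I e k = pol_sum (k ` I) (\<lambda>m. \<Sum>i | i \<in> I \<and> k i = m. e i) id"
  unfolding pol_sum_def id_def by (intro ext sum_regroup_by_image[where \<phi> = "\<lambda>m. monom m _"])

lemma tensor_sum_regroup:
  "finite I \<Longrightarrow> tensor_sum I e k = tensor_sum (k ` I) (\<lambda>m. \<Sum>i | i \<in> I \<and> k i = m. e i) id"
  unfolding tensor_sum_def id_def
  by (intro ext sum_regroup_by_image[where \<phi> = "\<lambda>m. of_bool (monoset m = _)"])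

lemma univariate_coeffs_unique:
  fixes a :: "nat \<Rightarrow> real"
  assumes "finite K" "\<And>t. (\<Sum>k\<in>K. a k * t ^ k) = 0" "k \<in> K"
  shows "a k = 0"
proof -
  define b where "b i = (if i \<in> K then a i else 0)" for i
  have "(\<Sum>i\<le>Max K. b i * t ^ i) = (\<Sum>i\<in>K. a i * t ^ i)" for t :: real
  proof -
    have "(\<Sum>i\<le>Max K. b i * t ^ i) = (\<Sum>i\<in>K. b i * t ^ i)"
      using assms(1) by (intro sum.mono_neutral_right) (auto simp: b_def)
    then show ?thesis by (simp add: b_def)
  qed
  then have "\<forall>i\<le>Max K. b i = 0"
    using assms(2) polyfun_eq_0[of b "Max K"] by simp
  moreover have "k \<le> Max K"
    using assms(1,3) by simp
  ultimately show ?thesis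
    using assms(3) by (auto simp: b_def)
qed

lemma monom_split_coord: "monom m x = x $ j ^ m j * (\<Prod>i\<in>UNIV - {j}. x $ i ^ m i)"
  unfolding monom_def by (rule prod.remove) simp_all

lemma monom_setting_coord:
  "monom m (\<chi> i. if i = j then t else x $ i) = t ^ m j * monom (m(j := 0)) x"
proof -
  have "(\<Prod>i\<in>UNIV - {j}. (\<chi> i. if i = j then t else x $ i) $ i ^ m i)
      = (\<Prod>i\<in>UNIV - {j}. x $ i ^ (m(j := 0)) i)"
    by (rule prod.cong) auto
  then show ?thesis
    unfolding monom_split_coord[of m _ j] monom_split_coord[of "m(j := 0)" _ j] by simp
qed

lemma monom_slice_eq_zero:
  fixes c :: "('n::finite \<Rightarrow> nat) \<Rightarrow> real"
  assumes "finite S" "\<And>x. (\<Sum>m\<in>S. c m * monom m x) = 0" "k \<in> (\<lambda>m. m j) ` S"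
  shows "(\<Sum>m | m \<in> S \<and> m j = k. c m * monom (m(j := 0)) x) = 0"
proof (rule univariate_coeffs_unique[where K = "(\<lambda>m. m j) ` S"])
  fix t :: real
  let ?y = "\<chi> i. if i = j then t else x $ i"
  have "(\<Sum>m | m \<in> S \<and> m j = k. c m * monom (m(j := 0)) x) * t ^ k
      = (\<Sum>m | m \<in> S \<and> m j = k. c m * monom m ?y)" for k
    unfolding sum_distrib_right monom_setting_coord by (rule sum.cong) auto
  then have "(\<Sum>k\<in>(\<lambda>m. m j) ` S. (\<Sum>m | m \<in> S \<and> m j = k. c m * monom (m(j := 0)) x) * t ^ k)
      = (\<Sum>k\<in>(\<lambda>m. m j) ` S. \<Sum>m | m \<in> S \<and> m j = k. c m * monom m ?y)"
    by simp
  also have "\<dots> = 0"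
    using assms(1,2) by (subst sum.group) auto
  finally show "(\<Sum>k\<in>(\<lambda>m. m j) ` S. (\<Sum>m | m \<in> S \<and> m j = k. c m * monom (m(j := 0)) x) * t ^ k) = 0" .
qed (use assms in auto)

text \<open>Induction on the set of variables the monomials may involve; the coefficients of a slice
  of fixed degree in x_j are those of a polynomial in the remaining variables.\<close>

lemma monom_coeffs_unique_vars:
  fixes V :: "'n::finite set"
  assumes "finite V"
  shows "finite S \<Longrightarrow> \<forall>m\<in>S. \<forall>i. i \<notin> V \<longrightarrow> m i = 0 \<Longrightarrow>
    \<forall>x::real^'n. (\<Sum>m\<in>S. c m * monom m x) = 0 \<Longrightarrow> m \<in> S \<Longrightarrow> c m = 0"
  using assms
proof (induction V arbitrary: S c m rule: finite_induct)
  case empty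
  then have "S = {\<lambda>i. 0}" by auto
  then show ?case using empty.prems(3,4) by (auto simp: monom_def)
next
  case (insert j V)
  define k where "k = m j"
  let ?slice = "{m \<in> S. m j = k}"
  have inj: "inj_on (\<lambda>m'. m'(j := 0)) ?slice"
    by (rule inj_onI) (metis (mono_tags) fun_upd_triv fun_upd_upd mem_Collect_eq)
  have "c (m'(j := k)) = 0" if "m' \<in> (\<lambda>m'. m'(j := 0)) ` ?slice" for m'
  proof (rule insert.IH[OF _ _ _ that])
    show "finite ((\<lambda>m'. m'(j := 0)) ` ?slice)"
      using insert.prems(1) by simp
    show "\<forall>m\<in>(\<lambda>m'. m'(j := 0)) ` ?slice. \<forall>i. i \<notin> V \<longrightarrow> m i = 0"
      using insert.prems(2) by auto
    have "(\<Sum>m | m \<in> S \<and> m j = k. c m * monom (m(j := 0)) x) = 0" for x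
      using insert.prems(1,3,4) k_def by (intro monom_slice_eq_zero) auto
    moreover have "(\<Sum>m\<in>(\<lambda>m'. m'(j := 0)) ` ?slice. c (m(j := k)) * monom m x)
        = (\<Sum>m | m \<in> S \<and> m j = k. c m * monom (m(j := 0)) x)" for x
      unfolding sum.reindex[OF inj] by (rule sum.cong) (auto simp: fun_upd_idem)
    ultimately show "\<forall>x. (\<Sum>m\<in>(\<lambda>m'. m'(j := 0)) ` ?slice. c (m(j := k)) * monom m x) = 0"
      by simp
  qed
  then show "c m = 0"
    using insert.prems(4) by (force simp: k_def)
qed

lemma monom_coeffs_unique:
  fixes c :: "('n::finite \<Rightarrow> nat) \<Rightarrow> real"
  assumes "finite S" "\<And>x. (\<Sum>m\<in>S. c m * monom m x) = 0" "m \<in> S"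
  shows "c m = 0"
  using monom_coeffs_unique_vars[of UNIV S c m] assms by simp

lemma pol_sum_id_restrict:
  assumes "finite U"
  shows "pol_sum U c id
    = pol_sum {m. (if m \<in> U then c m else 0) \<noteq> 0} (\<lambda>m. if m \<in> U then c m else 0) id"
  unfolding pol_sum_def using assms by (intro ext sum.mono_neutral_cong_right) auto

lemma is_pol_pol_sum:
  assumes "finite I"
  shows "is_pol (pol_sum I e k)"
proof -
  let ?c = "\<lambda>m. if m \<in> k ` I then \<Sum>i | i \<in> I \<and> k i = m. e i else 0"
  have "pol_sum I e k = pol_sum {m. ?c m \<noteq> 0} ?c id"
    using assms unfolding pol_sum_regroup[OF assms] by (rule pol_sum_id_restrict[OF finite_imageI])
  moreover have "finite {m. ?c m \<noteq> 0}"
    using assms by (auto intro: finite_subset[of _ "k ` I"])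
  ultimately show ?thesis
    unfolding is_pol_iff_pol_sum by (intro exI[of _ ?c] conjI)
qed

lemma pol_coeffs_pol_sum:
  assumes "finite U"
  shows "pol_coeffs (pol_sum U c id) = (\<lambda>m. if m \<in> U then c m else 0)"
  unfolding pol_coeffs_def
proof (rule the_equality)
  let ?c = "\<lambda>m. if m \<in> U then c m else 0"
  show "finite {m. ?c m \<noteq> 0} \<and>
      pol_sum U c id = (\<lambda>x. \<Sum>m\<in>{m. ?c m \<noteq> 0}. ?c m * monom m x)"
    using assms pol_sum_id_restrict[OF assms, of c]
    by (auto simp: pol_sum_def intro: finite_subset[of _ U])
  fix d
  assume d: "finite {m. d m \<noteq> 0} \<and> pol_sum U c id = (\<lambda>x. \<Sum>m\<in>{m. d m \<noteq> 0}. d m * monom m x)"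
  define V where "V = U \<union> {m. d m \<noteq> 0}"
  have "finite V"
    using assms d by (simp add: V_def)
  have "pol_sum V ?c id = pol_sum U c id"
    unfolding pol_sum_def using \<open>finite V\<close>
    by (intro ext sum.mono_neutral_cong_right) (auto simp: V_def)
  moreover have "pol_sum V d id = pol_sum {m. d m \<noteq> 0} d id"
    unfolding pol_sum_def using \<open>finite V\<close>
    by (intro ext sum.mono_neutral_right) (auto simp: V_def)
  moreover have "\<dots> = pol_sum U c id"
    using d by (simp add: pol_sum_def)
  ultimately have "(\<Sum>m\<in>V. (d m - ?c m) * monom m x) = 0" for x
    unfolding pol_sum_def by (simp add: fun_eq_iff left_diff_distrib sum_subtractf)
  then have "d m - ?c m = 0" if "m \<in> V" for m
    by (rule monom_coeffs_unique[OF \<open>finite V\<close> _ that])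
  moreover have "d m = 0" and "?c m = 0" if "m \<notin> V" for m
    using that by (auto simp: V_def)
  ultimately show "d = ?c"
    by (fastforce simp: fun_eq_iff)
qed

lemma lam_pol_sum:
  assumes "finite I"
  shows "lam (pol_sum I e k) = tensor_sum I e k"
proof
  fix M
  let ?c = "\<lambda>m. \<Sum>i | i \<in> I \<and> k i = m. e i"
  let ?U = "k ` I"
  have "finite ?U"
    using assms by simp
  have "lam (pol_sum I e k) M = lam (pol_sum ?U ?c id) M"
    unfolding pol_sum_regroup[OF assms] ..
  also have "\<dots> = (\<Sum>m | (if m \<in> ?U then ?c m else 0) \<noteq> 0 \<and> monoset m = M.
      if m \<in> ?U then ?c m else 0)"
    unfolding lam_def pol_coeffs_pol_sum[OF \<open>finite ?U\<close>] ..
  also have "\<dots> = (\<Sum>m\<in>?U. ?c m * of_bool (monoset m = M))"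
    using \<open>finite ?U\<close> by (intro sum.mono_neutral_cong_left) auto
  also have "\<dots> = tensor_sum ?U ?c id M"
    by (simp add: tensor_sum_def)
  also have "\<dots> = tensor_sum I e k M"
    unfolding tensor_sum_regroup[OF assms] ..
  finally show "lam (pol_sum I e k) M = tensor_sum I e k M" .
qed

lemma monom_add: "monom (\<lambda>v. a v + b v) x = monom a x * monom b x"
  unfolding monom_def by (simp add: power_add prod.distrib)

lemma monoset_add: "monoset (\<lambda>v. a v + b v) = monoset a + monoset b"
  unfolding monoset_def
  by (rule multiset_eqI) (auto simp: count_sum sum.distrib[symmetric] intro!: sum.cong)

lemma smooth_monoset: "f \<in># monoset m \<Longrightarrow> smooth f"
  unfolding monoset_def by (auto simp: set_mset_sum split: if_splits intro: smooth_coord)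

lemma prod_mset_monoset: "(\<Prod>f\<in>#monoset m. f x) = monom m x"
proof -
  have "(\<Prod>f\<in>#(\<Sum>i\<in>I. replicate_mset (m i) (coord i)). f x) = (\<Prod>i\<in>I. x $ i ^ m i)"
    if "finite I" for I
    using that by (induction I rule: finite_induct) (auto simp: coord_def)
  then show ?thesis
    unfolding monoset_def monom_def by simp
qed

lemma pol_sum_mult:
  "(\<lambda>x. pol_sum I e k x * pol_sum J f l x)
    = pol_sum (I \<times> J) (\<lambda>(i, j). e i * f j) (\<lambda>(i, j) v. k i v + l j v)"
  unfolding pol_sum_def
  by (simp add: sum_product sum.cartesian_product monom_add mult_ac case_prod_unfold)

lemma finite_submultisets: "finite {N. N \<subseteq># M}"
proof (rule finite_subset)
  show "{N. N \<subseteq># M} \<subseteq> (\<Union>n\<le>size M. multisets_of_size (set_mset M) n)"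
    by (auto simp: multisets_of_size_def dest: mset_subset_eqD size_mset_mono)
qed auto

lemma sum_submultisets_indicator:
  "(\<Sum>N | N \<subseteq># M. of_bool (X = N) * of_bool (Y = M - N)) = (of_bool (X + Y = M) :: 'a::semiring_1)"
proof -
  have "(\<Sum>N | N \<subseteq># M. of_bool (X = N) * of_bool (Y = M - N))
      = (\<Sum>N | N \<subseteq># M. if N = X then of_bool (Y = M - X) else (0 :: 'a))"
    by (intro sum.cong) auto
  also have "\<dots> = of_bool (X \<subseteq># M \<and> Y = M - X)"
    by (simp add: finite_submultisets)
  also have "X \<subseteq># M \<and> Y = M - X \<longleftrightarrow> X + Y = M"
    by (metis add_diff_cancel_left' mset_subset_eq_add_left subset_mset.add_diff_inverse)
  finally show ?thesis .
qed

lemma tprod_tensor_sum: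
  "tprod (tensor_sum I e k) (tensor_sum J f l)
    = tensor_sum (I \<times> J) (\<lambda>(i, j). e i * f j) (\<lambda>(i, j) v. k i v + l j v)"
proof
  fix M
  have "tprod (tensor_sum I e k) (tensor_sum J f l) M
      = (\<Sum>N | N \<subseteq># M. \<Sum>i\<in>I. \<Sum>j\<in>J.
          e i * f j * (of_bool (monoset (k i) = N) * of_bool (monoset (l j) = M - N)))"
    unfolding tprod_def tensor_sum_def by (simp add: sum_product mult_ac)
  also have "\<dots> = (\<Sum>i\<in>I. \<Sum>j\<in>J. e i * f j *
      (\<Sum>N | N \<subseteq># M. of_bool (monoset (k i) = N) * of_bool (monoset (l j) = M - N)))"
    by (simp add: sum_distrib_left sum.swap[of _ "{N. N \<subseteq># M}"])
  also have "\<dots> = tensor_sum (I \<times> J) (\<lambda>(i, j). e i * f j) (\<lambda>(i, j) v. k i v + l j v) M"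
    by (simp add: tensor_sum_def sum.cartesian_product sum_submultisets_indicator monoset_add
        case_prod_unfold)
  finally show "tprod (tensor_sum I e k) (tensor_sum J f l) M = \<dots>" .
qed

lemma lam_mult:
  assumes "is_pol p" "is_pol q"
  shows "lam (\<lambda>x. p x * q x) = tprod (lam p) (lam q)"
proof -
  obtain S c where "finite S" "p = pol_sum S c id"
    using assms(1) by (rule is_polE)
  moreover obtain T d where "finite T" "q = pol_sum T d id"
    using assms(2) by (rule is_polE)
  ultimately show ?thesis
    by (simp add: pol_sum_mult lam_pol_sum tprod_tensor_sum)
qed

lemma is_pol_mult:
  assumes "is_pol p" "is_pol q"
  shows "is_pol (\<lambda>x. p x * q x)"
proof -
  obtain S c where "finite S" "p = pol_sum S c id"
    using assms(1) by (rule is_polE)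
  moreover obtain T d where "finite T" "q = pol_sum T d id"
    using assms(2) by (rule is_polE)
  ultimately show ?thesis
    by (simp add: pol_sum_mult is_pol_pol_sum)
qed

lemma pol_sum_lincomb:
  assumes "finite I" "finite J"
  shows "(\<lambda>x. a * pol_sum I e k x + b * pol_sum J f l x)
    = pol_sum (I <+> J) (case_sum (\<lambda>i. a * e i) (\<lambda>j. b * f j)) (case_sum k l)"
  unfolding pol_sum_def using assms by (simp add: sum.Plus sum_distrib_left mult.assoc comp_def)

lemma is_pol_lincomb:
  assumes "is_pol p" "is_pol q"
  shows "is_pol (\<lambda>x. a * p x + b * q x)"
proof -
  obtain S c where "finite S" "p = pol_sum S c id"
    using assms(1) by (rule is_polE)
  moreover obtain T d where "finite T" "q = pol_sum T d id"
    using assms(2) by (rule is_polE)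
  ultimately show ?thesis
    by (simp add: pol_sum_lincomb is_pol_pol_sum)
qed

lemma pol_sum_const: "pol_sum {()} (\<lambda>_. c) (\<lambda>_ _. 0) = (\<lambda>x. c)"
  by (simp add: pol_sum_def monom_def)

lemma is_pol_const: "is_pol (\<lambda>x. c)"
  using is_pol_pol_sum[of "{()}" "\<lambda>_. c" "\<lambda>_ _. 0"] by (simp add: pol_sum_const)

section \<open>The symmetrisation map T\<close>

lemma star_smooth:
  assumes "\<And>r. bidiff (C r)" "\<And>t. smooth (F t)" "\<And>t. smooth (G t)"
  shows "smooth (star C F G r)"
  unfolding star_def using smooth_bidiff[OF assms(1) assms(2,3)] by (intro smooth_sum) auto

lemma star_0: "star C F G 0 = C 0 (F 0) (G 0)"
  unfolding star_def by simp

lemma star_list_smooth: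
  assumes "\<And>r. bidiff (C r)" "\<forall>f\<in>set fs. smooth f"
  shows "smooth (star_list C fs r)"
  using assms(2)
proof (induction fs arbitrary: r)
  case Nil
  then show ?case by (simp add: one_ser_def smooth_const_ser smooth_const)
next
  case (Cons f fs)
  have "smooth (star C (const_ser f) (star_list C fs) r)"
    by (rule star_smooth[OF assms(1)]) (use Cons smooth_const_ser in auto)
  then show ?case
    by simp
qed

lemma star_list_0:
  assumes "\<And>r. bidiff (C r)" "\<And>f g. smooth f \<Longrightarrow> smooth g \<Longrightarrow> C 0 f g = (\<lambda>x. f x * g x)"
    and "\<forall>f\<in>set fs. smooth f"
  shows "star_list C fs 0 = (\<lambda>x. \<Prod>f\<leftarrow>fs. f x)"
  using assms(3)
proof (induction fs)
  case Nil
  then show ?case by (simp add: one_ser_def const_ser_def)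
next
  case (Cons f fs)
  have "star_list C (f # fs) 0 = C 0 f (star_list C fs 0)"
    by (simp add: star_0 const_ser_def)
  also have "\<dots> = (\<lambda>x. f x * star_list C fs 0 x)"
    using Cons.prems star_list_smooth[OF assms(1)] by (intro assms(2)) auto
  finally show ?case
    using Cons by simp
qed

lemma Tmon_permute_list:
  "Tmon C M r x
    = (\<Sum>\<sigma> | \<sigma> permutes {..<size M}. star_list C (permute_list \<sigma> (SOME w. mset w = M)) r x)
      / fact (size M)"
proof -
  have "mset (SOME w. mset w = M) = M"
    by (rule someI_ex) (rule ex_mset)
  then have "length (SOME w. mset w = M) = size M"
    by (metis size_mset)
  then show ?thesis
    unfolding Tmon_def Let_def permute_list_def by simp
qed

lemma Tmon_smooth:
  assumes "\<And>r. bidiff (C r)" "\<forall>f\<in>#M. smooth f"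
  shows "smooth (Tmon C M r)"
proof -
  let ?w = "SOME w. mset w = M"
  have "mset ?w = M"
    by (rule someI_ex) (rule ex_mset)
  then have "smooth (star_list C (permute_list \<sigma> ?w) r)" if "\<sigma> permutes {..<size M}" for \<sigma>
    using that assms by (intro star_list_smooth) (auto simp flip: size_mset set_mset_mset)
  then have "smooth (\<lambda>x. \<Sum>\<sigma> | \<sigma> permutes {..<size M}.
      1 / fact (size M) * star_list C (permute_list \<sigma> ?w) r x)"
    by (intro smooth_sum smooth_scale) (auto simp: finite_permutations)
  then show ?thesis
    unfolding Tmon_permute_list by (simp add: sum_divide_distrib[symmetric] fun_eq_iff)
qed

lemma Tmon_0:
  assumes "\<And>r. bidiff (C r)" "\<And>f g. smooth f \<Longrightarrow> smooth g \<Longrightarrow> C 0 f g = (\<lambda>x. f x * g x)"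
    and "\<forall>f\<in>#M. smooth f"
  shows "Tmon C M 0 x = (\<Prod>f\<in>#M. f x)"
proof -
  let ?w = "SOME w. mset w = M"
  have w: "mset ?w = M"
    by (rule someI_ex) (rule ex_mset)
  have "star_list C (permute_list \<sigma> ?w) 0 x = (\<Prod>f\<in>#M. f x)" if "\<sigma> permutes {..<size M}" for \<sigma>
  proof -
    have "mset (permute_list \<sigma> ?w) = M"
      using that w by (simp flip: size_mset)
    moreover have "\<forall>f\<in>set (permute_list \<sigma> ?w). smooth f"
      using calculation assms(3) by (metis set_mset_mset)
    moreover have "(\<Prod>f\<leftarrow>L. f x) = (\<Prod>f\<in>#mset L. f x :: real)" for L
      by (metis mset_map prod_mset_prod_list)
    ultimately show ?thesis
      by (simp add: star_list_0[where C = C, OF assms(1,2)])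
  qed
  then have "(\<Sum>\<sigma> | \<sigma> permutes {..<size M}. star_list C (permute_list \<sigma> ?w) 0 x)
      = fact (size M) * (\<Prod>f\<in>#M. f x)"
    by (simp add: card_permutations)
  then show ?thesis
    unfolding Tmon_permute_list by simp
qed

lemma Tstar_tensor_sum:
  assumes "finite I"
  shows "Tstar C (tensor_sum I e k) = (\<lambda>r x. \<Sum>i\<in>I. e i * Tmon C (monoset (k i)) r x)"
proof (intro ext)
  fix r x
  let ?U = "monoset ` k ` I"
  have "finite ?U"
    using assms by simp
  have "tensor_sum I e k M = 0" if "M \<notin> ?U" for M
    using that by (auto simp: tensor_sum_def intro!: sum.neutral)
  then have "{M. tensor_sum I e k M \<noteq> 0} \<subseteq> ?U"
    by blast
  then have "Tstar C (tensor_sum I e k) r x = (\<Sum>M\<in>?U. tensor_sum I e k M * Tmon C M r x)"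
    unfolding Tstar_def using \<open>finite ?U\<close> by (intro sum.mono_neutral_left) auto
  also have "\<dots> = (\<Sum>i\<in>I. \<Sum>M\<in>?U. e i * of_bool (monoset (k i) = M) * Tmon C M r x)"
    unfolding tensor_sum_def sum_distrib_right by (rule sum.swap)
  also have "\<dots> = (\<Sum>i\<in>I. e i * Tmon C (monoset (k i)) r x)"
  proof (rule sum.cong[OF refl])
    fix i assume "i \<in> I"
    have "(\<Sum>M\<in>?U. e i * of_bool (monoset (k i) = M) * Tmon C M r x)
        = (\<Sum>M\<in>?U. if M = monoset (k i) then e i * Tmon C M r x else 0)"
      by (intro sum.cong) auto
    also have "\<dots> = e i * Tmon C (monoset (k i)) r x"
      using \<open>finite ?U\<close> \<open>i \<in> I\<close> by simp
    finally show "(\<Sum>M\<in>?U. e i * of_bool (monoset (k i) = M) * Tmon C M r x)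
        = e i * Tmon C (monoset (k i)) r x" .
  qed
  finally show "Tstar C (tensor_sum I e k) r x = (\<Sum>i\<in>I. e i * Tmon C (monoset (k i)) r x)" .
qed

lemma Tstar_lam_pol_sum:
  "finite I \<Longrightarrow> Tstar C (lam (pol_sum I e k)) = (\<lambda>r x. \<Sum>i\<in>I. e i * Tmon C (monoset (k i)) r x)"
  by (simp add: lam_pol_sum Tstar_tensor_sum)

lemma Tstar_lam_smooth:
  assumes "\<And>r. bidiff (C r)" "is_pol p"
  shows "smooth (Tstar C (lam p) r)"
proof -
  obtain S c where "finite S" "p = pol_sum S c id"
    using assms(2) by (rule is_polE)
  then show ?thesis
    using Tmon_smooth[where C = C, OF assms(1)] smooth_monoset
    by (auto simp: Tstar_lam_pol_sum intro!: smooth_sum smooth_scale)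
qed

lemma Tstar_lam_0:
  assumes "\<And>r. bidiff (C r)" "\<And>f g. smooth f \<Longrightarrow> smooth g \<Longrightarrow> C 0 f g = (\<lambda>x. f x * g x)"
    and "is_pol p"
  shows "Tstar C (lam p) 0 = p"
proof -
  obtain S c where "finite S" "p = pol_sum S c id"
    using assms(3) by (rule is_polE)
  have "Tmon C (monoset m) 0 x = monom m x" for m x
    using Tmon_0[where C = C, OF assms(1,2), of "monoset m" x] smooth_monoset[of _ m]
    by (simp add: prod_mset_monoset)
  with \<open>finite S\<close> have "Tstar C (lam p) 0 x = (\<Sum>m\<in>S. c m * monom m x)" for x
    unfolding \<open>p = pol_sum S c id\<close> by (simp add: Tstar_lam_pol_sum)
  then show ?thesis
    by (simp add: fun_eq_iff \<open>p = pol_sum S c id\<close> pol_sum_def)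
qed

lemma Tstar_lam_lincomb:
  assumes "is_pol p" "is_pol q"
  shows "Tstar C (lam (\<lambda>x. a * p x + b * q x))
    = (\<lambda>r x. a * Tstar C (lam p) r x + b * Tstar C (lam q) r x)"
proof -
  obtain S c where "finite S" "p = pol_sum S c id"
    using assms(1) by (rule is_polE)
  moreover obtain T d where "finite T" "q = pol_sum T d id"
    using assms(2) by (rule is_polE)
  ultimately show ?thesis
    by (simp add: pol_sum_lincomb Tstar_lam_pol_sum sum.Plus sum_distrib_left mult.assoc comp_def)
qed

lemma Tstar_lam_zero: "Tstar C (lam (\<lambda>x. 0)) = (\<lambda>r x. 0)"
  using Tstar_lam_pol_sum[where I = "{}" and C = C] by (simp add: pol_sum_def)

section \<open>The sun-product\<close>

lemma star_product_bidiff: "star_product P C \<Longrightarrow> bidiff (C r)"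
  unfolding star_product_def by blast

lemma star_product_0:
  "star_product P C \<Longrightarrow> smooth f \<Longrightarrow> smooth g \<Longrightarrow> C 0 f g = (\<lambda>x. f x * g x)"
  unfolding star_product_def by blast

lemma N0_add: "F \<in> N0 \<Longrightarrow> G \<in> N0 \<Longrightarrow> ser_add F G \<in> N0"
  using smooth_lincomb[of "F _" "G _" 1 1] is_pol_lincomb[of "F 0" "G 0" 1 1]
  by (simp add: N0_def ser_add_def)

lemma N0_scale: "F \<in> N0 \<Longrightarrow> ser_scale a F \<in> N0"
  using is_pol_lincomb[of "F 0" "F 0" a 0]
  by (simp add: N0_def ser_scale_def smooth_scale)

lemma one_ser_0: "one_ser 0 = (\<lambda>x. 1)"
  by (simp add: one_ser_def const_ser_def)

lemma one_ser_in_N0: "one_ser \<in> N0"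
  by (simp add: N0_def one_ser_def const_ser_def smooth_const is_pol_const)

lemma sun_eq_Tstar_lam:
  "is_pol (F 0) \<Longrightarrow> is_pol (G 0) \<Longrightarrow> sun C F G = Tstar C (lam (\<lambda>x. F 0 x * G 0 x))"
  unfolding sun_def proj0_def by (simp add: lam_mult)

lemma sun_0:
  assumes "star_product P C" "F \<in> N0" "G \<in> N0"
  shows "sun C F G 0 = (\<lambda>x. F 0 x * G 0 x)"
proof -
  have "is_pol (F 0)" "is_pol (G 0)"
    using assms(2,3) by (simp_all add: N0_def)
  then show ?thesis
    using Tstar_lam_0[where C = C, OF star_product_bidiff[OF assms(1)] star_product_0[OF assms(1)]]
    by (simp add: sun_eq_Tstar_lam is_pol_mult)
qed

lemma sun_in_N0:
  assumes "star_product P C" "F \<in> N0" "G \<in> N0"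
  shows "sun C F G \<in> N0"
proof -
  have "is_pol (F 0)" "is_pol (G 0)"
    using assms(2,3) by (simp_all add: N0_def)
  then show ?thesis
    using Tstar_lam_smooth[where C = C, OF star_product_bidiff[OF assms(1)]] sun_0[OF assms]
    by (simp add: N0_def sun_eq_Tstar_lam is_pol_mult)
qed

lemma sun_commute: "is_pol (F 0) \<Longrightarrow> is_pol (G 0) \<Longrightarrow> sun C F G = sun C G F"
  by (simp add: sun_eq_Tstar_lam mult.commute)

lemma sun_assoc:
  assumes "star_product P C" "F \<in> N0" "G \<in> N0" "H \<in> N0"
  shows "sun C (sun C F G) H = sun C F (sun C G H)"
  using assms sun_in_N0[OF assms(1)] sun_0[OF assms(1)]
  by (simp add: N0_def sun_eq_Tstar_lam mult.assoc)

lemma sun_lincomb_left: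
  assumes "is_pol (F 0)" "is_pol (F' 0)" "is_pol (G 0)"
  shows "sun C (ser_add (ser_scale a F) (ser_scale b F')) G
    = ser_add (ser_scale a (sun C F G)) (ser_scale b (sun C F' G))"
proof -
  have "sun C (ser_add (ser_scale a F) (ser_scale b F')) G
      = Tstar C (lam (\<lambda>x. (a * F 0 x + b * F' 0 x) * G 0 x))"
    using assms is_pol_lincomb[OF assms(1,2)]
    by (simp add: sun_eq_Tstar_lam ser_add_def ser_scale_def)
  also have "(\<lambda>x. (a * F 0 x + b * F' 0 x) * G 0 x)
      = (\<lambda>x. a * (F 0 x * G 0 x) + b * (F' 0 x * G 0 x))"
    by (simp add: algebra_simps)
  finally show ?thesis
    using assms
    by (simp add: Tstar_lam_lincomb is_pol_mult sun_eq_Tstar_lam ser_add_def ser_scale_def)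
qed

lemma sun_lincomb_right:
  assumes "is_pol (F 0)" "is_pol (F' 0)" "is_pol (G 0)"
  shows "sun C G (ser_add (ser_scale a F) (ser_scale b F'))
    = ser_add (ser_scale a (sun C G F)) (ser_scale b (sun C G F'))"
proof -
  have "is_pol (ser_add (ser_scale a F) (ser_scale b F') 0)"
    using is_pol_lincomb[OF assms(1,2)] by (simp add: ser_add_def ser_scale_def)
  then show ?thesis
    using assms by (simp add: sun_commute[of G] sun_lincomb_left)
qed

lemma sun_smult_one_ser:
  assumes "star_product P C" "c 0 = 0" "c 1 \<noteq> 0"
  shows "sun C (ser_smult c one_ser) one_ser \<noteq> ser_smult c (sun C one_ser one_ser)"
proof
  have smult_0: "ser_smult c one_ser 0 = (\<lambda>x. 0)"
    by (simp add: ser_smult_def assms(2))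
  have "sun C (ser_smult c one_ser) one_ser
      = Tstar C (lam (\<lambda>x. ser_smult c one_ser 0 x * one_ser 0 x))"
    by (rule sun_eq_Tstar_lam) (simp_all add: smult_0 one_ser_0 is_pol_const)
  also have "\<dots> = (\<lambda>r x. 0)"
    by (simp add: smult_0 Tstar_lam_zero)
  finally have "sun C (ser_smult c one_ser) one_ser 1 x = 0" for x
    by simp
  moreover have "ser_smult c (sun C one_ser one_ser) 1 x = c 1" for x
    using sun_0[OF assms(1) one_ser_in_N0 one_ser_in_N0]
    by (simp add: ser_smult_def assms(2) one_ser_0)
  moreover assume "sun C (ser_smult c one_ser) one_ser = ser_smult c (sun C one_ser one_ser)"
  ultimately show False
    using assms(3) by metis
qed

theorem lemma1:
  fixes P :: "('n::finite) fn \<Rightarrow> 'n fn \<Rightarrow> 'n fn"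
    and C :: "nat \<Rightarrow> 'n fn \<Rightarrow> 'n fn \<Rightarrow> 'n fn"
  assumes "poisson_bracket P"
    and "star_product P C"
  shows "(\<forall>F\<in>(N0 :: 'n fser set). \<forall>G\<in>N0. ser_add F G \<in> N0) \<and>
         (\<forall>a. \<forall>F\<in>(N0 :: 'n fser set). ser_scale a F \<in> N0) \<and>
         (\<forall>F\<in>N0. \<forall>G\<in>N0. sun C F G \<in> N0) \<and>
         (\<forall>F\<in>N0. \<forall>G\<in>N0. sun C F G = sun C G F) \<and>
         (\<forall>F\<in>N0. \<forall>G\<in>N0. \<forall>H\<in>N0. sun C (sun C F G) H = sun C F (sun C G H)) \<and>
         (\<forall>a b. \<forall>F\<in>N0. \<forall>F'\<in>N0. \<forall>G\<in>N0.
             sun C (ser_add (ser_scale a F) (ser_scale b F')) G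
               = ser_add (ser_scale a (sun C F G)) (ser_scale b (sun C F' G)) \<and>
             sun C G (ser_add (ser_scale a F) (ser_scale b F'))
               = ser_add (ser_scale a (sun C G F)) (ser_scale b (sun C G F'))) \<and>
         \<not> (\<forall>c. \<forall>F\<in>N0. \<forall>G\<in>N0.
             sun C (ser_smult c F) G = ser_smult c (sun C F G) \<and>
             sun C F (ser_smult c G) = ser_smult c (sun C F G))"
proof -
  have pol_0: "is_pol (F 0)" if "F \<in> N0" for F :: "'n fser"
    using that by (simp add: N0_def)
  have "sun C (ser_smult (\<lambda>s. of_bool (s = 1)) one_ser) one_ser
      \<noteq> ser_smult (\<lambda>s. of_bool (s = 1)) (sun C one_ser one_ser)"
    using assms(2) by (rule sun_smult_one_ser) simp_all
  then show ?thesis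
    using N0_add N0_scale sun_in_N0[OF assms(2)] sun_assoc[OF assms(2)] one_ser_in_N0
    by (auto simp: pol_0 sun_commute sun_lincomb_left sun_lincomb_right)
qed

end
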